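(* Let $a\neq0$ be a real constant and $\phi(x,z)=(x,\,f(x)g(z+ax),\,z)$ an affine factorable surface of the second kind in $G_3^1$ with $1-(fg')^2>0$. If its Gaussian curvature is a non-zero constant $K_o$, then the surface takes the form $y(x,z)=\left(g_o(z+ax)+\lambda_2\right)\left(\pm\frac{1}{g_o}\tanh\left[\sqrt{K_o}\,x\mp g_o\lambda_1\right]\right)$ for some constants $g_o\in\mathbb{R}\setminus\{0\}$ and $\lambda_1,\lambda_2\in\mathbb{R}$.
   Context: The pseudo-Galilean space $G_3^1$ is $\mathbb{R}^3$ with the scalar product $\langle X,Y\rangle=x_1y_1$ if $x_1\neq0$ or $y_1\neq0$, and $\langle X,Y\rangle=x_2y_2-x_3y_3$ if $x_1=y_1=0$. An affine factorable surface of the second kind is $\phi(x,z)=(x,f(x)g(z+ax),z)$ with $a\neq0$ constant. Here $f'$ denotes $df/dx$ and $g',g''$ denote derivatives of $g$ with respect to its argument $v=z+ax$. The Gaussian curvature is taken to be $K=\dfrac{f'^2g'^2-f''f\,g''g}{(1-(fg')^2)^2}$. *)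

theory Defs
  imports "HOL-Analysis.Analysis"
begin

text \<open>Gaussian curvature of the affine factorable surface of the second kind
  phi(x,z) = (x, f(x) g(z + a x), z) in the pseudo-Galilean space, at the point (x,z),
  with v = z + a x.\<close>
definition gauss_curv_AF2 ::
  "(real \<Rightarrow> real) \<Rightarrow> (real \<Rightarrow> real) \<Rightarrow> real \<Rightarrow> real \<Rightarrow> real \<Rightarrow> real" where
  "gauss_curv_AF2 f g a x z =
     (let v = z + a * x in
      ((deriv f x)\<^sup>2 * (deriv g v)\<^sup>2 - deriv (deriv f) x * f x * deriv (deriv g) v * g v)
      / (1 - (f x * deriv g v)\<^sup>2)\<^sup>2)"

end

theory Submission
  imports Defs
begin

text \<open>Clearing denominators, the curvature condition reads
  \<open>f'\<^sup>2 g'\<^sup>2 - f'' f g'' g = K (1 - f\<^sup>2 g'\<^sup>2)\<^sup>2\<close> for all \<open>x\<close> and all \<open>v = z + a x\<close>,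
  an identity in two independent variables. Viewed as a polynomial in \<open>g'(v)\<^sup>2\<close>, it
  cannot hold for three different values of \<open>g'(v)\<^sup>2\<close> unless \<open>f\<^sup>2\<close> is constant, and
  a constant \<open>f\<close> forces \<open>K = 0\<close>. So \<open>g'\<close> is a nonzero constant \<open>g\<^sub>0\<close>, \<open>g\<close> is affine, and
  \<open>h = g\<^sub>0 f\<close> satisfies \<open>h' = \<sigma> (1 - h\<^sup>2)\<close> with \<open>\<sigma>\<^sup>2 = K\<close>, whose solutions with
  \<open>|h| < 1\<close> are \<open>h = tanh (\<sigma> x + c)\<close>.\<close>

lemma continuous_on_UNIV_IVT:
  fixes \<phi> :: "real \<Rightarrow> real"
  assumes "continuous_on UNIV \<phi>" and "\<phi> x \<le> c" and "c \<le> \<phi> y"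
  shows "\<exists>t. \<phi> t = c"
proof -
  have "connected (range \<phi>)"
    using connected_continuous_image[OF assms(1) connected_UNIV] .
  then have "c \<in> range \<phi>"
    using assms(2,3) unfolding connected_iff_interval by blast
  then show ?thesis by auto
qed

lemma continuous_square_const_imp_const:
  fixes \<phi> :: "real \<Rightarrow> real"
  assumes cont: "continuous_on UNIV \<phi>" and sq: "\<And>x. (\<phi> x)\<^sup>2 = k"
  shows "\<phi> x = \<phi> y"
proof (rule ccontr)
  assume ne: "\<phi> x \<noteq> \<phi> y"
  then have opp: "\<phi> x = - \<phi> y"
    using sq[of x] sq[of y] by (metis power2_eq_iff)
  then have "\<phi> x \<le> 0 \<and> 0 \<le> \<phi> y \<or> \<phi> y \<le> 0 \<and> 0 \<le> \<phi> x" by linarith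
  then obtain t where "\<phi> t = 0"
    using continuous_on_UNIV_IVT[OF cont] by blast
  then have "k = 0" using sq[of t] by simp
  with sq[of x] sq[of y] ne show False by simp
qed

lemma quadratic_zero_at_three_points:
  fixes p q r t1 t2 t3 :: real
  assumes "t1 \<noteq> t2" "t1 \<noteq> t3" "t2 \<noteq> t3"
    and "\<And>t. t \<in> {t1, t2, t3} \<Longrightarrow> p + q * t + r * t\<^sup>2 = 0"
  shows "p = 0 \<and> q = 0 \<and> r = 0"
proof -
  have "(t1 - t2) * (q + r * (t1 + t2)) = 0" "(t1 - t3) * (q + r * (t1 + t3)) = 0"
    using assms(4)[of t1] assms(4)[of t2] assms(4)[of t3]
    by (simp_all add: algebra_simps power2_eq_square)
  then have q12: "q + r * (t1 + t2) = 0" and q13: "q + r * (t1 + t3) = 0"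
    using assms(1,2) by simp_all
  have "r * (t2 - t3) = (q + r * (t1 + t2)) - (q + r * (t1 + t3))" by (simp add: algebra_simps)
  then have "r = 0" using q12 q13 assms(3) by simp
  with q12 assms(4)[of t1] show ?thesis by simp
qed

text \<open>The identity below is the curvature condition with \<open>A = f'\<^sup>2\<close>, \<open>B = f'' f\<close>,
  \<open>u = f\<^sup>2\<close>, \<open>G\<^sub>1 = g'\<^sup>2\<close> and \<open>G\<^sub>2 = g'' g\<close>. Eliminating the unknown \<open>G\<^sub>2 v\<close> between
  two values of \<open>x\<close> leaves a quadratic in \<open>G\<^sub>1 v\<close>.\<close>

lemma separated_identity_imp_const:
  fixes A B u G1 G2 :: "real \<Rightarrow> real"
  assumes eq: "\<And>x v. A x * G1 v - B x * G2 v = K * (1 - u x * G1 v)\<^sup>2"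
    and "K \<noteq> 0" and u_nonneg: "\<And>x. u x \<ge> 0"
    and distinct: "G1 v1 \<noteq> G1 v2" "G1 v1 \<noteq> G1 v3" "G1 v2 \<noteq> G1 v3"
  shows "u x = u y"
proof (cases "\<exists>x0. B x0 \<noteq> 0")
  case True
  then obtain x0 where B0: "B x0 \<noteq> 0" by blast
  have "u x = u x0" for x
  proof -
    define p where "p = B x * K - B x0 * K"
    define q where "q = B x0 * A x - B x * A x0 - 2 * B x * K * u x0 + 2 * B x0 * K * u x"
    define r where "r = B x * K * (u x0)\<^sup>2 - B x0 * K * (u x)\<^sup>2"
    have quadratic: "p + q * G1 v + r * (G1 v)\<^sup>2 = 0" for v
      unfolding p_def q_def r_def using eq[of x v] eq[of x0 v] by algebra
    have "p = 0 \<and> q = 0 \<and> r = 0"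
      by (rule quadratic_zero_at_three_points[OF distinct]) (use quadratic in blast)
    then have "B x = B x0" and "B x * (u x0)\<^sup>2 = B x0 * (u x)\<^sup>2"
      unfolding p_def r_def using \<open>K \<noteq> 0\<close> by auto
    then have "(u x)\<^sup>2 = (u x0)\<^sup>2" using B0 by simp
    then show ?thesis using power2_eq_iff_nonneg[OF u_nonneg u_nonneg] by blast
  qed
  from this[of x] this[of y] show ?thesis by simp
next
  case False
  have quadratic: "- K + (A 0 + 2 * K * u 0) * G1 v + (- K * (u 0)\<^sup>2) * (G1 v)\<^sup>2 = 0" for v
    using eq[of 0 v] False by (simp add: algebra_simps power2_eq_square)
  have "- K = 0 \<and> A 0 + 2 * K * u 0 = 0 \<and> - K * (u 0)\<^sup>2 = 0"
    by (rule quadratic_zero_at_three_points[OF distinct]) (use quadratic in blast)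
  with \<open>K \<noteq> 0\<close> show ?thesis by simp
qed

lemma DERIV_const_imp_affine:
  fixes g :: "real \<Rightarrow> real"
  assumes "\<And>x. (g has_real_derivative c) (at x)"
  shows "g v = c * v + g 0"
proof -
  have "((\<lambda>v. g v - c * v) has_real_derivative 0) (at x)" for x
    using assms[of x] by (auto intro!: derivative_eq_intros)
  from DERIV_isconst_all[OF allI[OF this], of v 0] show ?thesis by simp
qed

lemma tanh_artanh_real:
  fixes y :: real
  assumes "\<bar>y\<bar> < 1"
  shows "tanh (artanh y) = y"
proof -
  define q where "q = (1 + y) / (1 - y)"
  have q: "q > 0" using assms unfolding q_def by (auto simp: abs_less_iff)
  have "exp (- 2 * artanh y) = 1 / q"
    by (simp add: artanh_def q_def[symmetric] exp_minus q inverse_eq_divide)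
  then have "tanh (artanh y) = (1 - 1 / q) / (1 + 1 / q)" by (simp add: tanh_real_altdef)
  also have "\<dots> = y" using assms unfolding q_def by (auto simp: field_simps abs_less_iff)
  finally show ?thesis .
qed

lemma riccati_tanh_solution:
  fixes h :: "real \<Rightarrow> real"
  assumes deriv: "\<And>x. (h has_real_derivative \<sigma> * (1 - (h x)\<^sup>2)) (at x)"
    and bounded: "\<And>x. \<bar>h x\<bar> < 1"
  shows "h x = tanh (\<sigma> * x + artanh (h 0))"
proof -
  have "((\<lambda>x. artanh (h x) - \<sigma> * x) has_real_derivative 0) (at y)" for y
  proof -
    have "(h y)\<^sup>2 < 1" using bounded[of y] by (simp add: abs_square_less_1)
    moreover have "((\<lambda>x. artanh (h x) - \<sigma> * x) has_real_derivative
        1 / (1 - (h y)\<^sup>2) * (\<sigma> * (1 - (h y)\<^sup>2)) - \<sigma>) (at y)"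
      by (intro DERIV_diff DERIV_chain2[OF artanh_real_has_field_derivative[OF bounded] deriv])
         (use DERIV_cmult_Id in blast)
    ultimately show ?thesis by simp
  qed
  from DERIV_isconst_all[OF allI[OF this], of x 0] have "artanh (h x) = \<sigma> * x + artanh (h 0)"
    by simp
  then show ?thesis using tanh_artanh_real[OF bounded[of x]] by simp
qed

lemma squared_riccati_imp_tanh:
  fixes h h' :: "real \<Rightarrow> real"
  assumes deriv: "\<And>x. (h has_real_derivative h' x) (at x)"
    and cont: "continuous_on UNIV h'"
    and bounded: "\<And>x. \<bar>h x\<bar> < 1"
    and squared: "\<And>x. (h' x)\<^sup>2 = K * (1 - (h x)\<^sup>2)\<^sup>2"
  obtains \<sigma> where "\<sigma>\<^sup>2 = K" and "\<And>x. h x = tanh (\<sigma> * x + artanh (h 0))"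
proof -
  have nonzero: "1 - (h x)\<^sup>2 \<noteq> 0" for x
    using bounded[of x] abs_square_less_1[of "h x"] by linarith
  define \<phi> where "\<phi> x = h' x / (1 - (h x)\<^sup>2)" for x
  have "continuous_on UNIV h"
    using deriv by (meson DERIV_isCont continuous_at_imp_continuous_on)
  then have cont_\<phi>: "continuous_on UNIV \<phi>"
    unfolding \<phi>_def using cont nonzero by (intro continuous_intros) auto
  have \<phi>_squared: "(\<phi> x)\<^sup>2 = K" for x
    using squared[of x] nonzero[of x] by (simp add: \<phi>_def power_divide)
  have "h' x = \<phi> 0 * (1 - (h x)\<^sup>2)" for x
    using continuous_square_const_imp_const[OF cont_\<phi> \<phi>_squared, of x 0] nonzero[of x]
    by (simp add: \<phi>_def field_simps)
  then have "(h has_real_derivative \<phi> 0 * (1 - (h x)\<^sup>2)) (at x)" for x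
    using deriv[of x] by simp
  from riccati_tanh_solution[OF this bounded] \<phi>_squared that show ?thesis by blast
qed

lemma tanh_affine_sign_normal:
  fixes \<sigma> K c :: real
  assumes "\<sigma>\<^sup>2 = K"
  obtains s :: real where "s = 1 \<or> s = -1" and "\<And>x. tanh (\<sigma> * x + c) = s * tanh (sqrt K * x + s * c)"
proof -
  have sqrt: "sqrt K = \<bar>\<sigma>\<bar>" using assms by (metis real_sqrt_abs)
  show ?thesis
  proof (cases "\<sigma> \<ge> 0")
    case True
    then show ?thesis using that[of 1] sqrt by simp
  next
    case False
    then have "tanh (\<sigma> * x + c) = - tanh (sqrt K * x - c)" for x
      using sqrt tanh_minus[of "\<sigma> * x + c"] by simp
    then show ?thesis using that[of "-1"] by simp
  qed
qed

lemma gauss_curv_AF2_cleared: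
  assumes "gauss_curv_AF2 f g a x (v - a * x) = K"
    and "1 - (f x * deriv g v)\<^sup>2 > 0"
  shows "(deriv f x)\<^sup>2 * (deriv g v)\<^sup>2 - deriv (deriv f) x * f x * deriv (deriv g) v * g v
           = K * (1 - (f x * deriv g v)\<^sup>2)\<^sup>2"
  using assms by (simp add: gauss_curv_AF2_def Let_def field_simps)

lemma curvature_identity_imp_deriv_const:
  fixes f g :: "real \<Rightarrow> real"
  assumes f_diff: "\<And>x. f differentiable at x" and cont_dg: "continuous_on UNIV (deriv g)"
    and "K \<noteq> 0" and pos: "\<And>x v. 1 - (f x * deriv g v)\<^sup>2 > 0"
    and eq: "\<And>x v. (deriv f x)\<^sup>2 * (deriv g v)\<^sup>2 - deriv (deriv f) x * f x * deriv (deriv g) v * g v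
                   = K * (1 - (f x * deriv g v)\<^sup>2)\<^sup>2"
  shows "deriv g v = deriv g w"
proof -
  define G1 where "G1 v = (deriv g v)\<^sup>2" for v
  have cont_G1: "continuous_on UNIV G1" unfolding G1_def by (intro continuous_intros cont_dg)
  have G1_const: "G1 v1 = G1 v2" for v1 v2
  proof (rule ccontr)
    assume ne: "G1 v1 \<noteq> G1 v2"
    have "min (G1 v1) (G1 v2) \<le> (G1 v1 + G1 v2) / 2" "(G1 v1 + G1 v2) / 2 \<le> max (G1 v1) (G1 v2)"
      by auto
    then obtain v3 where v3: "G1 v3 = (G1 v1 + G1 v2) / 2"
      using continuous_on_UNIV_IVT[OF cont_G1] by (metis max_def min_def)
    have cont_f: "continuous_on UNIV f"
      using f_diff by (simp add: continuous_at_imp_continuous_on differentiable_imp_continuous_within)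
    have separated: "(deriv f x)\<^sup>2 * G1 v - (deriv (deriv f) x * f x) * (deriv (deriv g) v * g v)
        = K * (1 - (f x)\<^sup>2 * G1 v)\<^sup>2" for x v
      using eq[of x v] by (simp add: G1_def power_mult_distrib algebra_simps)
    have "G1 v1 \<noteq> G1 v3" "G1 v2 \<noteq> G1 v3" using ne v3 by auto
    from separated_identity_imp_const[OF separated \<open>K \<noteq> 0\<close> zero_le_power2 ne this]
    have "(f x)\<^sup>2 = (f 0)\<^sup>2" for x .
    then have "f x = f 0" for x by (rule continuous_square_const_imp_const[OF cont_f])
    then have "f = (\<lambda>_. f 0)" by (rule ext)
    then have "deriv f = (\<lambda>_. 0)" by (metis deriv_const)
    then have "K * (1 - (f 0 * deriv g 0)\<^sup>2)\<^sup>2 = 0" using eq[of 0 0] by simp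
    with pos[of 0 0] \<open>K \<noteq> 0\<close> show False by simp
  qed
  have "(deriv g v)\<^sup>2 = G1 0" for v using G1_const[of v 0] unfolding G1_def .
  then show ?thesis by (rule continuous_square_const_imp_const[OF cont_dg])
qed

lemma curvature_identity_imp_tanh_form:
  fixes f g :: "real \<Rightarrow> real"
  assumes f_diff: "\<And>x. f differentiable at x" and df_diff: "\<And>x. deriv f differentiable at x"
    and g_diff: "\<And>v. g differentiable at v" and dg_diff: "\<And>v. deriv g differentiable at v"
    and "K \<noteq> 0" and pos: "\<And>x v. 1 - (f x * deriv g v)\<^sup>2 > 0"
    and eq: "\<And>x v. (deriv f x)\<^sup>2 * (deriv g v)\<^sup>2 - deriv (deriv f) x * f x * deriv (deriv g) v * g v
                   = K * (1 - (f x * deriv g v)\<^sup>2)\<^sup>2"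
  obtains g0 \<sigma> where "g0 \<noteq> 0" and "\<sigma>\<^sup>2 = K" and "\<And>v. g v = g0 * v + g 0"
    and "\<And>x. g0 * f x = tanh (\<sigma> * x + artanh (g0 * f 0))"
proof -
  have has_deriv: "(F has_real_derivative deriv F x) (at x)"
    if "\<And>x. F differentiable at x" for F :: "real \<Rightarrow> real" and x
    using that DERIV_deriv_iff_real_differentiable by blast
  have continuous: "continuous_on UNIV F"
    if "\<And>x. F differentiable at x" for F :: "real \<Rightarrow> real"
    using that by (simp add: continuous_at_imp_continuous_on differentiable_imp_continuous_within)
  define g0 where "g0 = deriv g 0"
  have dg: "deriv g = (\<lambda>_. g0)" unfolding g0_def
    using curvature_identity_imp_deriv_const[OF f_diff continuous[OF dg_diff] \<open>K \<noteq> 0\<close> pos eq]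
    by blast
  have squared: "(g0 * deriv f x)\<^sup>2 = K * (1 - (g0 * f x)\<^sup>2)\<^sup>2" for x
    using eq[of x 0] by (simp add: dg power_mult_distrib algebra_simps)
  have "g0 \<noteq> 0" using squared[of 0] \<open>K \<noteq> 0\<close> by auto
  have g_affine: "g v = g0 * v + g 0" for v
  proof (rule DERIV_const_imp_affine)
    show "(g has_real_derivative g0) (at x)" for x
      using has_deriv[OF g_diff, of x] by (simp add: dg)
  qed
  have "((\<lambda>x. g0 * f x) has_real_derivative g0 * deriv f x) (at x)" for x
    using has_deriv[OF f_diff] by (intro DERIV_cmult)
  moreover have "continuous_on UNIV (\<lambda>x. g0 * deriv f x)"
    by (intro continuous_intros continuous[OF df_diff])
  moreover have "\<bar>g0 * f x\<bar> < 1" for x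
    using pos[of x 0] abs_square_less_1[of "g0 * f x"] by (simp add: dg mult.commute)
  ultimately obtain \<sigma> where "\<sigma>\<^sup>2 = K" and "\<And>x. g0 * f x = tanh (\<sigma> * x + artanh (g0 * f 0))"
    using squared by (rule squared_riccati_imp_tanh) blast
  with that \<open>g0 \<noteq> 0\<close> g_affine show ?thesis by blast
qed

theorem mainTheorem3:
  fixes f g :: "real \<Rightarrow> real" and a K0 :: real
  assumes "a \<noteq> 0"
    and "\<And>x. f differentiable at x" and "\<And>x. deriv f differentiable at x"
    and "\<And>v. g differentiable at v" and "\<And>v. deriv g differentiable at v"
    and "\<And>x z. 1 - (f x * deriv g (z + a * x))\<^sup>2 > 0"
    and "K0 \<noteq> 0"
    and "\<And>x z. gauss_curv_AF2 f g a x z = K0"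
  shows "\<exists>g0 lam1 lam2 s. g0 \<noteq> 0 \<and> (s = 1 \<or> s = -1) \<and>
           (\<forall>x z. f x * g (z + a * x) =
              (g0 * (z + a * x) + lam2) * (s * (1 / g0) * tanh (sqrt K0 * x - s * g0 * lam1)))"
proof -
  \<comment> \<open>\<open>x\<close> and \<open>v = z + a x\<close> range independently over all of \<open>\<real>\<^sup>2\<close> for every \<open>a\<close>.\<close>
  have pos: "1 - (f x * deriv g v)\<^sup>2 > 0" for x v
    using assms(6)[of x "v - a * x"] by simp
  obtain g0 \<sigma> where "g0 \<noteq> 0" and \<sigma>: "\<sigma>\<^sup>2 = K0" and g_affine: "\<And>v. g v = g0 * v + g 0"
    and f_tanh: "\<And>x. g0 * f x = tanh (\<sigma> * x + artanh (g0 * f 0))"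
    using curvature_identity_imp_tanh_form[OF assms(2-5,7) pos gauss_curv_AF2_cleared[OF assms(8) pos]]
    by blast
  define c where "c = artanh (g0 * f 0)"
  obtain s where s: "s = 1 \<or> s = -1"
    and tanh_s: "\<And>x. tanh (\<sigma> * x + c) = s * tanh (sqrt K0 * x + s * c)"
    by (rule tanh_affine_sign_normal[OF \<sigma>, where c = c]) blast
  have "f x * g (z + a * x) = (g0 * (z + a * x) + g 0) *
          (s * (1 / g0) * tanh (sqrt K0 * x - s * g0 * (- c / g0)))" for x z
  proof -
    have "f x = s * tanh (sqrt K0 * x + s * c) / g0"
      using f_tanh[of x] tanh_s[of x] \<open>g0 \<noteq> 0\<close> unfolding c_def[symmetric]
      by (simp add: eq_divide_eq mult.commute)
    moreover have "sqrt K0 * x - s * g0 * (- c / g0) = sqrt K0 * x + s * c"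
      using \<open>g0 \<noteq> 0\<close> by simp
    ultimately show ?thesis using g_affine[of "z + a * x"] by simp
  qed
  with \<open>g0 \<noteq> 0\<close> s show ?thesis by blast
qed

end
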